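(* Let $G$ be Boidol's group and let $(O_{\rho_k,\lambda_k})_{k\in\mathbb{N}}$ be a properly converging sequence in $\Gamma_3\subset\mathfrak{g}^*/G$ (with $\rho_k\in\mathbb{R}$, $\lambda_k\neq0$) such that $\lim_{k\to\infty}\lambda_k=0$. Then: (1) the sequence $\omega_k:=\rho_k\lambda_k$ converges to some $\omega\in\mathbb{R}$; (2) if $\omega\neq0$, the limit set of the sequence is the two-point set $\{O_{\omega,-1,0},O_{-\omega,1,0}\}$; (3) if $\omega=0$, the limit set of the sequence is $\Gamma_1\cup\Gamma_0$.
   Context: Boidol's group $G$ is the simply connected Lie group with Lie algebra $\mathfrak{g}$ having basis $T,X,Y,Z$ and non-trivial brackets $[T,X]=-X$, $[T,Y]=Y$, $[X,Y]=Z$; concretely $G=\mathbb{R}^4$ with product $(t,x,y,z)\cdot(t',x',y',z')=(t+t',\,e^{t'}x+x',\,e^{-t'}y+y',\,z+z'+\tfrac12(e^{t'}xy'-e^{-t'}x'y))$. Write elements of $\mathfrak{g}^*$ as $aT^*+bX^*+cY^*+dZ^*$. The coadjoint orbits are exactly: for $\rho\in\mathbb{R},\lambda\neq0$, $O_{\rho,\lambda}=\{\frac{\rho\lambda+xy}{\lambda}T^*+xX^*+yY^*+\lambda Z^*: x,y\in\mathbb{R}\}$; for $(\alpha,\beta)\neq(0,0)$, $O_{\alpha,\beta,0}=\{uT^*+e^t\alpha X^*+e^{-t}\beta Y^*: t,u\in\mathbb{R}\}$; for $\tau\in\mathbb{R}$, the singletons $\{\tau T^*\}$. Let $\Gamma_3=\{O_{\rho,\lambda}:\lambda\neq0\}$,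 $\Gamma_1=\{O_{1,0,0},O_{-1,0,0},O_{0,1,0},O_{0,-1,0}\}$, $\Gamma_0=\{\{\tau T^*\}:\tau\in\mathbb{R}\}$. The orbit space $\mathfrak{g}^*/G$ has the quotient topology. The limit set of a sequence in $\mathfrak{g}^*/G$ is the set of all its limits; a sequence is properly converging if it has at least one limit and every subsequence has the same limit set as the whole sequence. *)

theory Defs
  imports "HOL-Analysis.Analysis"
begin

text \<open>Elements of the dual g* are written a T* + b X* + c Y* + d Z*,
  represented as the tuple (a, b, c, d).\<close>

type_synonym gdual = "real \<times> real \<times> real \<times> real"

definition orbit3 :: "real \<Rightarrow> real \<Rightarrow> gdual set" where
  "orbit3 \<rho> l = {((\<rho> * l + x * y) / l, x, y, l) | x y. True}"

definition orbit1 :: "real \<Rightarrow> real \<Rightarrow> gdual set" where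
  "orbit1 \<alpha> \<beta> = {(u, exp t * \<alpha>, exp (- t) * \<beta>, 0) | t u. True}"

definition orbit0 :: "real \<Rightarrow> gdual set" where
  "orbit0 \<tau> = {(\<tau>, 0, 0, 0)}"

definition Gamma3 :: "gdual set set" where
  "Gamma3 = {orbit3 \<rho> l | \<rho> l. l \<noteq> 0}"

definition Gamma1 :: "gdual set set" where
  "Gamma1 = {orbit1 1 0, orbit1 (-1) 0, orbit1 0 1, orbit1 0 (-1)}"

definition Gamma0 :: "gdual set set" where
  "Gamma0 = range orbit0"

definition orbits :: "gdual set set" where
  "orbits = Gamma3 \<union> {orbit1 \<alpha> \<beta> | \<alpha> \<beta>. (\<alpha>, \<beta>) \<noteq> (0, 0)} \<union> Gamma0"

definition orbit_of :: "gdual \<Rightarrow> gdual set" where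
  "orbit_of p = (SOME Q. Q \<in> orbits \<and> p \<in> Q)"

definition orbit_top :: "gdual set topology" where
  "orbit_top = topology (\<lambda>U. U \<subseteq> orbits \<and> open (orbit_of -` U))"

lemma istopology_orbit_top: "istopology (\<lambda>U. U \<subseteq> orbits \<and> open (orbit_of -` U))"
  unfolding istopology_def by (auto simp: vimage_Union intro!: open_UN)

definition limit_set :: "(nat \<Rightarrow> gdual set) \<Rightarrow> gdual set set" where
  "limit_set s = {Q. limitin orbit_top s Q sequentially}"

definition properly_converging :: "(nat \<Rightarrow> gdual set) \<Rightarrow> bool" where
  "properly_converging s \<longleftrightarrow> limit_set s \<noteq> {} \<and>
     (\<forall>r. strict_mono r \<longrightarrow> limit_set (s \<circ> r) = limit_set s)"

end

(*
  The functions d and a d - b c (the Casimir function) are continuous and constant on coadjoint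
  orbits, so they pass to the quotient topology: along a convergent sequence of orbits, their
  values on chosen representatives converge to their values on any limit orbit. Evaluated at
  (rho_k, 0, 0, lambda_k) they give lambda_k and rho_k lambda_k. Hence, once the limit set is
  nonempty, rho_k lambda_k converges to some omega, and every limit orbit meets the set
  {d = 0, -b c = omega}. Conversely every orbit through a point (a, b, c, 0) with -b c = omega
  is a limit: factor a lambda_k - rho_k lambda_k = x_k y_k with x_k -> b, y_k -> c; then
  (a, x_k, y_k, lambda_k) lies in the k-th orbit and converges to (a, b, c, 0). It remains to
  list the orbits meeting {d = 0, -b c = omega}: for omega <> 0 these are the two orbits
  O_{omega,-1,0} and O_{-omega,1,0}, for omega = 0 they are Gamma_1 and Gamma_0.
*)
theory Submission
  imports Defs
begin

lemma tendsto_factor: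
  fixes z :: "'a \<Rightarrow> real"
  assumes "(z \<longlongrightarrow> b * c) F"
  shows "\<exists>x y. (x \<longlongrightarrow> b) F \<and> (y \<longlongrightarrow> c) F \<and> (\<forall>k. x k * y k = z k)"
proof -
  consider "b \<noteq> 0" | "c \<noteq> 0" | "b = 0" "c = 0" by blast
  then show ?thesis
  proof cases
    case 1
    have "((\<lambda>k. z k / b) \<longlongrightarrow> c) F" using tendsto_divide[OF assms tendsto_const 1] 1 by simp
    moreover have "\<forall>k. b * (z k / b) = z k" using 1 by simp
    ultimately show ?thesis by blast
  next
    case 2
    have "((\<lambda>k. z k / c) \<longlongrightarrow> b) F" using tendsto_divide[OF assms tendsto_const 2] 2 by simp
    moreover have "\<forall>k. z k / c * c = z k" using 2 by simp
    ultimately show ?thesis by blast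
  next
    case 3
    have "((\<lambda>k. sqrt \<bar>z k\<bar>) \<longlongrightarrow> 0) F" "((\<lambda>k. sqrt (z k)) \<longlongrightarrow> 0) F"
      using assms 3 by (auto intro!: tendsto_eq_intros)
    moreover have "sqrt \<bar>w\<bar> * sqrt w = w" for w :: real
      \<comment> \<open>\<open>sqrt\<close> is odd on negative arguments\<close>
      by (cases "w \<ge> 0") (auto simp: real_sqrt_mult[symmetric] real_sqrt_minus)
    ultimately show ?thesis using 3 by blast
  qed
qed

lemma orbit1_rescale: "orbit1 \<alpha> \<beta> = orbit1 (exp s * \<alpha>) (exp (-s) * \<beta>)"
proof -
  have "(u, exp t * \<alpha>, exp (- t) * \<beta>, 0) \<in> orbit1 (exp s * \<alpha>) (exp (-s) * \<beta>)" for t u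
    unfolding orbit1_def
    by (rule CollectI, rule exI[of _ "t - s"], rule exI[of _ u])
       (simp add: mult.assoc[symmetric] exp_add[symmetric])
  moreover have "(u, exp t * (exp s * \<alpha>), exp (- t) * (exp (-s) * \<beta>), 0) \<in> orbit1 \<alpha> \<beta>" for t u
    unfolding orbit1_def
    by (rule CollectI, rule exI[of _ "t + s"], rule exI[of _ u])
       (simp add: mult.assoc[symmetric] exp_add[symmetric])
  ultimately show ?thesis unfolding orbit1_def[of \<alpha> \<beta>] orbit1_def[of "exp s * \<alpha>"] by blast
qed

lemma orbit1_rescale_fst:
  assumes "0 < \<alpha> * \<alpha>'"
  shows "orbit1 \<alpha> \<beta> = orbit1 \<alpha>' (\<alpha> * \<beta> / \<alpha>')"
proof -
  have "0 < \<alpha>' / \<alpha>" "\<alpha> \<noteq> 0" using assms by (auto simp: zero_less_mult_iff zero_less_divide_iff)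
  then show ?thesis
    using orbit1_rescale[of \<alpha> \<beta> "ln (\<alpha>' / \<alpha>)"] by (simp add: exp_minus)
qed

lemma orbit1_rescale_snd:
  assumes "0 < \<beta> * \<beta>'"
  shows "orbit1 \<alpha> \<beta> = orbit1 (\<beta> * \<alpha> / \<beta>') \<beta>'"
proof -
  have "0 < \<beta> / \<beta>'" "\<beta> \<noteq> 0" using assms by (auto simp: zero_less_mult_iff zero_less_divide_iff)
  then show ?thesis
    using orbit1_rescale[of \<alpha> \<beta> "ln (\<beta> / \<beta>')"] by (simp add: exp_minus)
qed

lemma orbit1_eq_sgn_fst: "\<alpha> \<noteq> 0 \<Longrightarrow> orbit1 \<alpha> \<beta> = orbit1 (sgn \<alpha>) (\<bar>\<alpha>\<bar> * \<beta>)"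
  using orbit1_rescale_fst[of \<alpha> "sgn \<alpha>" \<beta>] by (auto simp: sgn_if zero_less_mult_iff)

lemma orbit1_eq_sgn_snd: "\<beta> \<noteq> 0 \<Longrightarrow> orbit1 0 \<beta> = orbit1 0 (sgn \<beta>)"
  using orbit1_rescale_snd[of \<beta> "sgn \<beta>" 0] by (auto simp: sgn_if zero_less_mult_iff)

lemma mem_orbit3_iff: "l \<noteq> 0 \<Longrightarrow> (a, x, y, l) \<in> orbit3 \<rho> l \<longleftrightarrow> a * l = \<rho> * l + x * y"
  unfolding orbit3_def by (auto simp: field_simps)

lemma mem_orbit1: "(u, \<alpha>, \<beta>, 0) \<in> orbit1 \<alpha> \<beta>"
  unfolding orbit1_def by (rule CollectI, rule exI[of _ 0], rule exI[of _ u]) simp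

lemma orbit3_in_orbits: "l \<noteq> 0 \<Longrightarrow> orbit3 \<rho> l \<in> orbits"
  unfolding orbits_def Gamma3_def by blast

lemma orbit1_in_orbits: "\<alpha> \<noteq> 0 \<or> \<beta> \<noteq> 0 \<Longrightarrow> orbit1 \<alpha> \<beta> \<in> orbits"
  unfolding orbits_def by blast

lemma orbit0_in_orbits: "orbit0 \<tau> \<in> orbits"
  unfolding orbits_def Gamma0_def by blast

lemma orbits_nonempty: "Q \<in> orbits \<Longrightarrow> Q \<noteq> {}"
  unfolding orbits_def Gamma3_def Gamma0_def orbit3_def orbit1_def orbit0_def by blast

definition orbit_through :: "gdual \<Rightarrow> gdual set" where
  "orbit_through = (\<lambda>(a, b, c, d).
     if d \<noteq> 0 then orbit3 ((a * d - b * c) / d) d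
     else if b \<noteq> 0 then orbit1 (sgn b) (\<bar>b\<bar> * c)
     else if c \<noteq> 0 then orbit1 0 (sgn c)
     else orbit0 a)"

lemma mem_orbit_through: "p \<in> orbit_through p"
proof -
  obtain a b c d where p: "p = (a, b, c, d)" by (metis prod.exhaust)
  consider "d \<noteq> 0" | "d = 0" "b \<noteq> 0" | "d = 0" "b = 0" "c \<noteq> 0" | "d = 0" "b = 0" "c = 0"
    by blast
  then show ?thesis
  proof cases
    case 1
    then show ?thesis by (simp add: p orbit_through_def mem_orbit3_iff field_simps)
  next
    case 2
    then show ?thesis by (simp add: p orbit_through_def orbit1_eq_sgn_fst[symmetric] mem_orbit1)
  next
    case 3
    then show ?thesis by (simp add: p orbit_through_def orbit1_eq_sgn_snd[symmetric] mem_orbit1)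
  next
    case 4
    then show ?thesis by (simp add: p orbit_through_def orbit0_def)
  qed
qed

lemma orbit_through_in_orbits: "orbit_through p \<in> orbits"
  by (cases p)
     (simp add: orbit_through_def orbit3_in_orbits orbit1_in_orbits orbit0_in_orbits sgn_eq_0_iff)

lemma orbit_through_unique:
  assumes "Q \<in> orbits" "p \<in> Q"
  shows "Q = orbit_through p"
  using assms unfolding orbits_def Gamma3_def Gamma0_def
proof (elim UnE CollectE exE conjE)
  fix \<rho> l assume Q: "Q = orbit3 \<rho> l" and l: "l \<noteq> 0"
  with assms(2) obtain x y where "p = ((\<rho> * l + x * y) / l, x, y, l)" unfolding orbit3_def by auto
  then show ?thesis using Q l by (simp add: orbit_through_def field_simps)
next
  fix \<alpha> \<beta> assume Q: "Q = orbit1 \<alpha> \<beta>" and nonzero: "(\<alpha>, \<beta>) \<noteq> (0, 0)"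
  obtain t u where p: "p = (u, exp t * \<alpha>, exp (-t) * \<beta>, 0)"
    using assms(2) Q unfolding orbit1_def by auto
  show ?thesis
  proof (cases "\<alpha> = 0")
    case True
    then show ?thesis using nonzero orbit1_eq_sgn_snd[of \<beta>]
      by (simp add: Q p orbit_through_def sgn_mult)
  next
    case False
    have "orbit_through p = orbit1 (sgn \<alpha>) (\<bar>exp t * \<alpha>\<bar> * (exp (-t) * \<beta>))"
      using False by (simp add: p orbit_through_def sgn_mult)
    also have "\<bar>exp t * \<alpha>\<bar> * (exp (-t) * \<beta>) = \<bar>\<alpha>\<bar> * \<beta>"
      by (simp add: abs_mult exp_minus field_simps)
    finally show ?thesis using orbit1_eq_sgn_fst[OF False] Q by simp
  qed
next
  assume "Q \<in> range orbit0"
  then show ?thesis using assms(2) by (auto simp: orbit0_def orbit_through_def)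
qed

lemma orbit_of_eq_orbit_through: "orbit_of p = orbit_through p"
proof -
  have "\<exists>Q. Q \<in> orbits \<and> p \<in> Q" using mem_orbit_through orbit_through_in_orbits by blast
  then have "orbit_of p \<in> orbits \<and> p \<in> orbit_of p" unfolding orbit_of_def by (rule someI_ex)
  then show ?thesis using orbit_through_unique by blast
qed

lemma mem_orbit_of: "p \<in> orbit_of p"
  by (simp add: orbit_of_eq_orbit_through mem_orbit_through)

lemma orbit_of_in_orbits: "orbit_of p \<in> orbits"
  by (simp add: orbit_of_eq_orbit_through orbit_through_in_orbits)

lemma orbit_of_eq: "Q \<in> orbits \<Longrightarrow> p \<in> Q \<Longrightarrow> orbit_of p = Q"
  by (metis orbit_of_eq_orbit_through orbit_through_unique)

lemma openin_orbit_top: "openin orbit_top U \<longleftrightarrow> U \<subseteq> orbits \<and> open (orbit_of -` U)"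
  unfolding orbit_top_def using istopology_orbit_top by simp

lemma topspace_orbit_top: "topspace orbit_top = orbits"
proof -
  have "orbit_of -` orbits = UNIV" using orbit_of_in_orbits by auto
  then have "openin orbit_top orbits" unfolding openin_orbit_top by auto
  then show ?thesis by (metis openin_orbit_top openin_subset openin_topspace subset_antisym)
qed

lemma limitin_orbit_topI:
  assumes "Q \<in> orbits" "p \<in> Q" "\<And>k. s k \<in> orbits" "\<And>k. P k \<in> s k" "P \<longlonglongrightarrow> p"
  shows "limitin orbit_top s Q sequentially"
  unfolding limitin_def topspace_orbit_top
proof (intro conjI allI impI)
  show "Q \<in> orbits" by fact
  fix U assume U: "openin orbit_top U \<and> Q \<in> U"
  then have "open (orbit_of -` U)" "p \<in> orbit_of -` U"
    using orbit_of_eq[OF assms(1,2)] by (auto simp: openin_orbit_top)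
  then have "eventually (\<lambda>k. P k \<in> orbit_of -` U) sequentially"
    using assms(5) topological_tendstoD by blast
  then show "eventually (\<lambda>k. s k \<in> U) sequentially"
    by eventually_elim (use orbit_of_eq[OF assms(3,4)] in auto)
qed

definition orbit_invariant :: "(gdual \<Rightarrow> real) \<Rightarrow> bool" where
  "orbit_invariant F \<longleftrightarrow> (\<forall>Q\<in>orbits. \<forall>p\<in>Q. \<forall>q\<in>Q. F p = F q)"

lemma orbit_invariantI:
  assumes "\<And>\<rho> l x y. l \<noteq> 0 \<Longrightarrow> F ((\<rho> * l + x * y) / l, x, y, l) = F_generic \<rho> l"
    and "\<And>\<alpha> \<beta> t u. F (u, exp t * \<alpha>, exp (-t) * \<beta>, 0) = F_flat \<alpha> \<beta>"
  shows "orbit_invariant F"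
  unfolding orbit_invariant_def
proof (intro ballI)
  fix Q p q assume Q: "Q \<in> orbits" and p: "p \<in> Q" and q: "q \<in> Q"
  from Q show "F p = F q" unfolding orbits_def Gamma3_def Gamma0_def
  proof (elim UnE CollectE exE conjE)
    fix \<rho> l assume "Q = orbit3 \<rho> l" "l \<noteq> 0"
    then show ?thesis using p q assms(1) unfolding orbit3_def by auto
  next
    fix \<alpha> \<beta> assume "Q = orbit1 \<alpha> \<beta>"
    then show ?thesis using p q assms(2) unfolding orbit1_def by auto
  next
    assume "Q \<in> range orbit0"
    then show ?thesis using p q unfolding orbit0_def by auto
  qed
qed

lemma limitin_orbit_top_invariant:
  assumes "limitin orbit_top s Q sequentially" "orbit_invariant F" "continuous_on UNIV F"
    and "p \<in> Q" "\<And>k. q k \<in> s k"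
  shows "(\<lambda>k. F (q k)) \<longlonglongrightarrow> F p"
proof (rule tendstoI)
  fix e :: real assume "e > 0"
  define U where "U = {R \<in> orbits. \<forall>r\<in>R. dist (F r) (F p) < e}"
  have "orbit_of -` U = {x. dist (F x) (F p) < e}"
  proof (intro set_eqI iffI)
    fix x assume "x \<in> orbit_of -` U"
    then show "x \<in> {x. dist (F x) (F p) < e}" using mem_orbit_of[of x] unfolding U_def by auto
  next
    fix x assume x: "x \<in> {x. dist (F x) (F p) < e}"
    have "\<forall>r\<in>orbit_of x. F r = F x"
      using assms(2) mem_orbit_of[of x] orbit_of_in_orbits[of x] unfolding orbit_invariant_def by metis
    then show "x \<in> orbit_of -` U" using x orbit_of_in_orbits[of x] unfolding U_def by auto
  qed
  moreover have "open {x. dist (F x) (F p) < e}"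
    using assms(3) by (intro open_Collect_less continuous_intros) (auto simp: continuous_on_eq_continuous_at)
  ultimately have "openin orbit_top U" unfolding openin_orbit_top U_def by auto
  moreover have "Q \<in> orbits"
    using assms(1) limitin_topspace topspace_orbit_top by metis
  then have "Q \<in> U"
    using assms(2,4) \<open>e > 0\<close> unfolding U_def orbit_invariant_def by fastforce
  ultimately have "eventually (\<lambda>k. s k \<in> U) sequentially"
    using assms(1) unfolding limitin_def by blast
  then show "eventually (\<lambda>k. dist (F (q k)) (F p) < e) sequentially"
    by eventually_elim (use assms(5) in \<open>auto simp: U_def\<close>)
qed

definition casimir :: "gdual \<Rightarrow> real" where
  "casimir = (\<lambda>(a, b, c, d). a * d - b * c)"

definition zcoord :: "gdual \<Rightarrow> real" where
  "zcoord = (\<lambda>(a, b, c, d). d)"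

lemma continuous_on_casimir: "continuous_on UNIV casimir"
  unfolding casimir_def split_beta by (intro continuous_intros)

lemma continuous_on_zcoord: "continuous_on UNIV zcoord"
  unfolding zcoord_def split_beta by (intro continuous_intros)

lemma orbit_invariant_casimir: "orbit_invariant casimir"
  by (rule orbit_invariantI[where F_generic = "\<lambda>\<rho> l. \<rho> * l"
                            and F_flat = "\<lambda>\<alpha> \<beta>. - (\<alpha> * \<beta>)"])
     (auto simp: casimir_def field_simps exp_minus)

lemma orbit_invariant_zcoord: "orbit_invariant zcoord"
  by (rule orbit_invariantI[where F_generic = "\<lambda>\<rho> l. l" and F_flat = "\<lambda>\<alpha> \<beta>. 0"]) (auto simp: zcoord_def)

lemma limitin_orbit3_tendsto:
  assumes "\<And>k. l k \<noteq> 0" "limitin orbit_top (\<lambda>k. orbit3 (\<rho> k) (l k)) Q sequentially" "p \<in> Q"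
  shows "(\<lambda>k. \<rho> k * l k) \<longlonglongrightarrow> casimir p" and "l \<longlonglongrightarrow> zcoord p"
proof -
  have base: "(\<rho> k, 0, 0, l k) \<in> orbit3 (\<rho> k) (l k)" for k
    using assms(1) by (simp add: mem_orbit3_iff)
  show "(\<lambda>k. \<rho> k * l k) \<longlonglongrightarrow> casimir p"
    using limitin_orbit_top_invariant[OF assms(2) orbit_invariant_casimir continuous_on_casimir assms(3) base]
    by (simp add: casimir_def)
  show "l \<longlonglongrightarrow> zcoord p"
    using limitin_orbit_top_invariant[OF assms(2) orbit_invariant_zcoord continuous_on_zcoord assms(3) base]
    by (simp add: zcoord_def)
qed

definition casimir_level_orbits :: "real \<Rightarrow> gdual set set" where
  "casimir_level_orbits \<omega> = {Q \<in> orbits. \<exists>p\<in>Q. zcoord p = 0 \<and> casimir p = \<omega>}"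

lemma casimir_level_orbitsE:
  assumes "Q \<in> casimir_level_orbits \<omega>"
  obtains a b c where "Q \<in> orbits" "(a, b, c, 0) \<in> Q" "b * c = - \<omega>"
  using assms unfolding casimir_level_orbits_def zcoord_def casimir_def by force

lemma orbit1_in_casimir_level_orbits:
  "\<alpha> \<noteq> 0 \<or> \<beta> \<noteq> 0 \<Longrightarrow> orbit1 \<alpha> \<beta> \<in> casimir_level_orbits (- (\<alpha> * \<beta>))"
  unfolding casimir_level_orbits_def
  by (intro CollectI conjI orbit1_in_orbits bexI[OF _ mem_orbit1[of 0]]) (simp_all add: zcoord_def casimir_def)

lemma orbit0_in_casimir_level_orbits: "orbit0 \<tau> \<in> casimir_level_orbits 0"
  unfolding casimir_level_orbits_def
  by (intro CollectI conjI orbit0_in_orbits) (simp add: orbit0_def zcoord_def casimir_def)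

lemma casimir_level_orbits_nonzero:
  assumes "\<omega> \<noteq> 0"
  shows "casimir_level_orbits \<omega> = {orbit1 \<omega> (-1), orbit1 (-\<omega>) 1}"
proof
  show "casimir_level_orbits \<omega> \<subseteq> {orbit1 \<omega> (-1), orbit1 (-\<omega>) 1}"
  proof
    fix Q assume "Q \<in> casimir_level_orbits \<omega>"
    then obtain a b c where Q: "Q \<in> orbits" "(a, b, c, 0) \<in> Q" and bc: "b * c = - \<omega>"
      by (rule casimir_level_orbitsE)
    have "b \<noteq> 0" using bc assms by auto
    then have "Q = orbit1 b c"
      using orbit_through_unique[OF Q] orbit1_eq_sgn_fst[of b c] by (simp add: orbit_through_def)
    moreover have "orbit1 b c = orbit1 \<omega> (-1)" if "0 < b * \<omega>"
      using orbit1_rescale_fst[OF that, of c] bc assms by simp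
    moreover have "orbit1 b c = orbit1 (-\<omega>) 1" if "0 < b * - \<omega>"
      using orbit1_rescale_fst[OF that, of c] bc assms by simp
    moreover have "b * \<omega> \<noteq> 0" using \<open>b \<noteq> 0\<close> assms by simp
    then have "0 < b * \<omega> \<or> 0 < b * - \<omega>" by linarith
    ultimately show "Q \<in> {orbit1 \<omega> (-1), orbit1 (-\<omega>) 1}" by blast
  qed
  show "{orbit1 \<omega> (-1), orbit1 (-\<omega>) 1} \<subseteq> casimir_level_orbits \<omega>"
    using orbit1_in_casimir_level_orbits[of \<omega> "-1"] orbit1_in_casimir_level_orbits[of "-\<omega>" 1] assms
    by simp
qed

lemma casimir_level_orbits_zero: "casimir_level_orbits 0 = Gamma1 \<union> Gamma0"
proof
  show "casimir_level_orbits 0 \<subseteq> Gamma1 \<union> Gamma0"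
  proof
    fix Q assume "Q \<in> casimir_level_orbits 0"
    then obtain a b c where Q: "Q \<in> orbits" "(a, b, c, 0) \<in> Q" and "b * c = 0"
      by (rule casimir_level_orbitsE) simp
    then show "Q \<in> Gamma1 \<union> Gamma0"
      using orbit_through_unique[OF Q] by (auto simp: orbit_through_def Gamma1_def Gamma0_def sgn_if)
  qed
  show "Gamma1 \<union> Gamma0 \<subseteq> casimir_level_orbits 0"
    using orbit1_in_casimir_level_orbits[of 1 0] orbit1_in_casimir_level_orbits[of "-1" 0]
      orbit1_in_casimir_level_orbits[of 0 1] orbit1_in_casimir_level_orbits[of 0 "-1"]
      orbit0_in_casimir_level_orbits
    by (auto simp: Gamma1_def Gamma0_def)
qed

lemma limit_set_orbit3:
  assumes "\<And>k. l k \<noteq> 0" "l \<longlonglongrightarrow> 0" "(\<lambda>k. \<rho> k * l k) \<longlonglongrightarrow> \<omega>"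
  shows "limit_set (\<lambda>k. orbit3 (\<rho> k) (l k)) = casimir_level_orbits \<omega>"
proof (intro set_eqI iffI)
  fix Q assume "Q \<in> limit_set (\<lambda>k. orbit3 (\<rho> k) (l k))"
  then have lim: "limitin orbit_top (\<lambda>k. orbit3 (\<rho> k) (l k)) Q sequentially"
    by (simp add: limit_set_def)
  then have "Q \<in> orbits" using limitin_topspace topspace_orbit_top by metis
  moreover obtain p where p: "p \<in> Q" using orbits_nonempty[OF \<open>Q \<in> orbits\<close>] by blast
  moreover have "casimir p = \<omega>" "zcoord p = 0"
    using LIMSEQ_unique limitin_orbit3_tendsto[OF assms(1) lim p] assms(2,3) by metis+
  ultimately show "Q \<in> casimir_level_orbits \<omega>" unfolding casimir_level_orbits_def by blast
next
  fix Q assume "Q \<in> casimir_level_orbits \<omega>"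
  then obtain a b c where Q: "Q \<in> orbits" "(a, b, c, 0) \<in> Q" and bc: "b * c = - \<omega>"
    by (rule casimir_level_orbitsE)
  have "(\<lambda>k. a * l k - \<rho> k * l k) \<longlonglongrightarrow> b * c"
    using tendsto_diff[OF tendsto_mult[OF tendsto_const assms(2)] assms(3), of a] bc by simp
  then obtain x y where x: "x \<longlonglongrightarrow> b" and y: "y \<longlonglongrightarrow> c"
    and xy: "\<And>k. x k * y k = a * l k - \<rho> k * l k"
    using tendsto_factor by blast
  have "(a, x k, y k, l k) \<in> orbit3 (\<rho> k) (l k)" for k
    using assms(1) xy by (simp add: mem_orbit3_iff)
  moreover have "(\<lambda>k. (a, x k, y k, l k)) \<longlonglongrightarrow> (a, b, c, 0)"
    by (intro tendsto_Pair tendsto_const x y assms(2))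
  ultimately have "limitin orbit_top (\<lambda>k. orbit3 (\<rho> k) (l k)) Q sequentially"
    by (rule limitin_orbit_topI[OF Q orbit3_in_orbits[OF assms(1)]])
  then show "Q \<in> limit_set (\<lambda>k. orbit3 (\<rho> k) (l k))"
    by (simp add: limit_set_def)
qed

theorem proposition2p3:
  fixes \<rho> l :: "nat \<Rightarrow> real"
  assumes "\<And>k. l k \<noteq> 0"
    and "properly_converging (\<lambda>k. orbit3 (\<rho> k) (l k))"
    and "l \<longlonglongrightarrow> 0"
  shows "\<exists>\<omega>. (\<lambda>k. \<rho> k * l k) \<longlonglongrightarrow> \<omega> \<and>
           (\<omega> \<noteq> 0 \<longrightarrow> limit_set (\<lambda>k. orbit3 (\<rho> k) (l k)) = {orbit1 \<omega> (-1), orbit1 (-\<omega>) 1}) \<and>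
           (\<omega> = 0 \<longrightarrow> limit_set (\<lambda>k. orbit3 (\<rho> k) (l k)) = Gamma1 \<union> Gamma0)"
proof -
  obtain Q where "limitin orbit_top (\<lambda>k. orbit3 (\<rho> k) (l k)) Q sequentially"
    using assms(2) unfolding properly_converging_def limit_set_def by blast
  moreover from this obtain p where "p \<in> Q"
    using limitin_topspace topspace_orbit_top orbits_nonempty by (metis ex_in_conv)
  ultimately have "(\<lambda>k. \<rho> k * l k) \<longlonglongrightarrow> casimir p"
    using limitin_orbit3_tendsto(1) assms(1) by blast
  moreover from this have "limit_set (\<lambda>k. orbit3 (\<rho> k) (l k)) = casimir_level_orbits (casimir p)"
    using limit_set_orbit3 assms(1,3) by blast
  ultimately show ?thesis
    using casimir_level_orbits_nonzero casimir_level_orbits_zero by auto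
qed

end
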